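(* Let $\Gamma$ be a distance-regular graph with classical parameters $(D,b,\alpha,\beta)$ such that $b\ge2$, $b-1\ge\alpha\ge1$ and $D\ge3$, geometric with respect to a set $\mathcal C$ of Delsarte cliques (members of $\mathcal C$ are called lines). Let $r=[D]$. Assume that for every vertex $x$ the local graph at $x$ is the $\alpha$-clique extension of a $\frac{\beta}{\alpha}\times r$-grid, and assume $\beta>\alpha r$. Let $M$ be an assembly and $x$ a vertex at distance 2 from $M$. Let $B=\Gamma_2(x)\cap M$ and $L(B)=\{\ell\cap B : \ell\in\mathcal C,\ |\ell\cap B|\ge 2\}$. Then $(B,L(B))$ is a $2$-$(\alpha(b+1)+1,\alpha+1,1)$-design. In particular $\alpha+1$ divides $b(b+1)$.
   Context: Distance-regular graph with intersection numbers $b_i,c_i$, valency $k=b_0$; $\Gamma_i(x)$ is the set of vertices at distance $i$ from $x$. For integer $b\ne1$, $[j]=\frac{b^j-1}{b-1}$. Classical parameters $(D,b,\alpha,\beta)$: diameter $D$, $b_i=([D]-[i])(\beta-\alpha[i])$, $c_i=[i](1+\alpha[i-1])$. A Delsarte clique is a clique with $1+\frac{k}{-\theta_{\min}}$ vertices, $\theta_{\min}$ the smallest adjacency eigenvalue; geometric with respect to $\mathcal C$ means every edge lies in exactly one member of $\mathcal C$. An assembly is a maximal clique of $\Gamma$ not in $\mathcal C$. $d(x,M)=\min_{y\in M}d(x,y)$. The $m\times n$-grid is $K_m\Box K_n$; the $s$-clique extension of $\Delta$ replaces each vertex by an $s$-clique, vertices in distinct cliques adjacent iff the original vertices are adjacent.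 A $t$-$(v,k,\lambda)$-design is a pair $(\mathcal P,\mathcal B)$ with $|\mathcal P|=v$, $\mathcal B$ a set of $k$-subsets of $\mathcal P$, such that every $t$-subset of $\mathcal P$ lies in exactly $\lambda$ members of $\mathcal B$. *)

theory Defs
  imports Complex_Main
begin

text \<open>A finite simple graph is given by a vertex set V and an adjacency predicate E;
  adjacency is always relativised to V.\<close>

definition adj :: "'a set \<Rightarrow> ('a \<Rightarrow> 'a \<Rightarrow> bool) \<Rightarrow> 'a \<Rightarrow> 'a \<Rightarrow> bool" where
  "adj V E x y \<longleftrightarrow> x \<in> V \<and> y \<in> V \<and> E x y"

definition simple_graph :: "'a set \<Rightarrow> ('a \<Rightarrow> 'a \<Rightarrow> bool) \<Rightarrow> bool" where
  "simple_graph V E \<longleftrightarrow> finite V \<and> V \<noteq> {} \<and> (\<forall>x y. E x y \<longrightarrow> E y x) \<and> (\<forall>x. \<not> E x x)"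

definition gdist :: "'a set \<Rightarrow> ('a \<Rightarrow> 'a \<Rightarrow> bool) \<Rightarrow> 'a \<Rightarrow> 'a \<Rightarrow> nat" where
  "gdist V E x y = (LEAST n. (adj V E ^^ n) x y)"

definition connected_graph :: "'a set \<Rightarrow> ('a \<Rightarrow> 'a \<Rightarrow> bool) \<Rightarrow> bool" where
  "connected_graph V E \<longleftrightarrow> (\<forall>x\<in>V. \<forall>y\<in>V. \<exists>n. (adj V E ^^ n) x y)"

definition Gam :: "'a set \<Rightarrow> ('a \<Rightarrow> 'a \<Rightarrow> bool) \<Rightarrow> nat \<Rightarrow> 'a \<Rightarrow> 'a set" where
  "Gam V E i x = {y \<in> V. gdist V E x y = i}"

definition diameter :: "'a set \<Rightarrow> ('a \<Rightarrow> 'a \<Rightarrow> bool) \<Rightarrow> nat" where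
  "diameter V E = Max {gdist V E x y | x y. x \<in> V \<and> y \<in> V}"

definition distance_regular ::
  "'a set \<Rightarrow> ('a \<Rightarrow> 'a \<Rightarrow> bool) \<Rightarrow> nat \<Rightarrow> (nat \<Rightarrow> nat) \<Rightarrow> (nat \<Rightarrow> nat) \<Rightarrow> bool" where
  "distance_regular V E D bs cs \<longleftrightarrow>
     simple_graph V E \<and> connected_graph V E \<and> diameter V E = D \<and>
     (\<forall>x\<in>V. \<forall>y\<in>V. \<forall>i. gdist V E x y = i \<longrightarrow>
        (1 \<le> i \<and> i \<le> D \<longrightarrow> card (Gam V E (i - 1) x \<inter> Gam V E 1 y) = cs i) \<and>
        (i < D \<longrightarrow> card (Gam V E (i + 1) x \<inter> Gam V E 1 y) = bs i))"

text \<open>Gaussian integer [j] = (b^j - 1)/(b - 1) = 1 + b + ... + b^(j-1).\<close>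
definition qint :: "int \<Rightarrow> nat \<Rightarrow> int" where
  "qint b j = (\<Sum>k<j. b ^ k)"

definition classical_parameters ::
  "'a set \<Rightarrow> ('a \<Rightarrow> 'a \<Rightarrow> bool) \<Rightarrow> nat \<Rightarrow> int \<Rightarrow> int \<Rightarrow> int \<Rightarrow> bool" where
  "classical_parameters V E D b \<alpha> \<beta> \<longleftrightarrow>
     (\<exists>bs cs. distance_regular V E D bs cs \<and>
        (\<forall>i<D. int (bs i) = (qint b D - qint b i) * (\<beta> - \<alpha> * qint b i)) \<and>
        (\<forall>i. 1 \<le> i \<and> i \<le> D \<longrightarrow> int (cs i) = qint b i * (1 + \<alpha> * qint b (i - 1))))"

definition adj_eigenvalue :: "'a set \<Rightarrow> ('a \<Rightarrow> 'a \<Rightarrow> bool) \<Rightarrow> real \<Rightarrow> bool" where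
  "adj_eigenvalue V E \<theta> \<longleftrightarrow>
     (\<exists>v :: 'a \<Rightarrow> real. (\<exists>x\<in>V. v x \<noteq> 0) \<and>
        (\<forall>x\<in>V. (\<Sum>y\<in>{y\<in>V. E x y}. v y) = \<theta> * v x))"

definition theta_min :: "'a set \<Rightarrow> ('a \<Rightarrow> 'a \<Rightarrow> bool) \<Rightarrow> real" where
  "theta_min V E = Min {\<theta>. adj_eigenvalue V E \<theta>}"

definition valency :: "'a set \<Rightarrow> ('a \<Rightarrow> 'a \<Rightarrow> bool) \<Rightarrow> 'a \<Rightarrow> nat" where
  "valency V E x = card {y\<in>V. E x y}"

text \<open>Valency k of a regular graph (valency of an arbitrary vertex).\<close>
definition graph_valency :: "'a set \<Rightarrow> ('a \<Rightarrow> 'a \<Rightarrow> bool) \<Rightarrow> nat" where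
  "graph_valency V E = valency V E (SOME x. x \<in> V)"

definition is_clique :: "'a set \<Rightarrow> ('a \<Rightarrow> 'a \<Rightarrow> bool) \<Rightarrow> 'a set \<Rightarrow> bool" where
  "is_clique V E K \<longleftrightarrow> K \<subseteq> V \<and> (\<forall>x\<in>K. \<forall>y\<in>K. x \<noteq> y \<longrightarrow> E x y)"

definition maximal_clique :: "'a set \<Rightarrow> ('a \<Rightarrow> 'a \<Rightarrow> bool) \<Rightarrow> 'a set \<Rightarrow> bool" where
  "maximal_clique V E K \<longleftrightarrow> is_clique V E K \<and> (\<forall>K'. is_clique V E K' \<and> K \<subseteq> K' \<longrightarrow> K' = K)"

definition delsarte_clique :: "'a set \<Rightarrow> ('a \<Rightarrow> 'a \<Rightarrow> bool) \<Rightarrow> nat \<Rightarrow> 'a set \<Rightarrow> bool" where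
  "delsarte_clique V E k K \<longleftrightarrow> is_clique V E K \<and>
     real (card K) = 1 + real k / (- theta_min V E)"

definition geometric_wrt :: "'a set \<Rightarrow> ('a \<Rightarrow> 'a \<Rightarrow> bool) \<Rightarrow> 'a set set \<Rightarrow> bool" where
  "geometric_wrt V E \<C> \<longleftrightarrow> (\<forall>K\<in>\<C>. delsarte_clique V E (graph_valency V E) K) \<and>
     (\<forall>x\<in>V. \<forall>y\<in>V. E x y \<longrightarrow> (\<exists>!K. K \<in> \<C> \<and> x \<in> K \<and> y \<in> K))"

definition assembly :: "'a set \<Rightarrow> ('a \<Rightarrow> 'a \<Rightarrow> bool) \<Rightarrow> 'a set set \<Rightarrow> 'a set \<Rightarrow> bool" where
  "assembly V E \<C> M \<longleftrightarrow> maximal_clique V E M \<and> M \<notin> \<C>"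

definition set_dist :: "'a set \<Rightarrow> ('a \<Rightarrow> 'a \<Rightarrow> bool) \<Rightarrow> 'a \<Rightarrow> 'a set \<Rightarrow> nat" where
  "set_dist V E x M = Min (gdist V E x ` M)"

definition ext_grid_vertices :: "nat \<Rightarrow> nat \<Rightarrow> nat \<Rightarrow> ((nat \<times> nat) \<times> nat) set" where
  "ext_grid_vertices s m n = ({..<m} \<times> {..<n}) \<times> {..<s}"

definition grid_adj :: "nat \<times> nat \<Rightarrow> nat \<times> nat \<Rightarrow> bool" where
  "grid_adj p q \<longleftrightarrow> (fst p = fst q \<and> snd p \<noteq> snd q) \<or> (fst p \<noteq> fst q \<and> snd p = snd q)"

definition ext_grid_adj :: "(nat \<times> nat) \<times> nat \<Rightarrow> (nat \<times> nat) \<times> nat \<Rightarrow> bool" where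
  "ext_grid_adj u w \<longleftrightarrow> u \<noteq> w \<and> (fst u = fst w \<or> grid_adj (fst u) (fst w))"

definition local_is_ext_grid :: "'a set \<Rightarrow> ('a \<Rightarrow> 'a \<Rightarrow> bool) \<Rightarrow> 'a \<Rightarrow> nat \<Rightarrow> nat \<Rightarrow> nat \<Rightarrow> bool" where
  "local_is_ext_grid V E x s m n \<longleftrightarrow>
     (\<exists>f. bij_betw f (Gam V E 1 x) (ext_grid_vertices s m n) \<and>
        (\<forall>u\<in>Gam V E 1 x. \<forall>w\<in>Gam V E 1 x. E u w \<longleftrightarrow> ext_grid_adj (f u) (f w)))"

definition t_design :: "nat \<Rightarrow> nat \<Rightarrow> nat \<Rightarrow> nat \<Rightarrow> 'a set \<Rightarrow> 'a set set \<Rightarrow> bool" where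
  "t_design t v k lam P \<B> \<longleftrightarrow> finite P \<and> card P = v \<and>
     (\<forall>B\<in>\<B>. B \<subseteq> P \<and> card B = k) \<and>
     (\<forall>T. T \<subseteq> P \<and> card T = t \<longrightarrow> card {B\<in>\<B>. T \<subseteq> B} = lam)"

end

theory Submission
  imports Defs "Jordan_Normal_Form.Char_Poly"
begin

text \<open>The local graphs force every maximal clique through a vertex \<open>y\<close> to be \<open>y\<close> plus a column
  (a \<^emph>\<open>line\<close>, of size \<open>\<alpha>m + 1\<close>) or \<open>y\<close> plus a row (of size \<open>\<alpha>r + 1\<close>) of the local grid
  at \<open>y\<close>. The lines cover every vertex \<open>r\<close> times and every edge once, which gives
  \<open>\<theta>\<^sub>m\<^sub>i\<^sub>n \<ge> -r\<close>; hence the Delsarte cliques are exactly the lines, and the assembly \<open>M\<close> is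
  \<open>z\<close> plus a row at each of its vertices \<open>z\<close>.

  Take \<open>z \<in> M\<close> with \<open>d(x, z) = 2\<close>. The \<open>c\<^sub>2 = (b + 1)(\<alpha> + 1)\<close> common neighbours of \<open>x\<close> and \<open>z\<close>
  sit in distinct cells of the local grid at \<open>z\<close>, \<open>\<alpha> + 1\<close> in each of \<open>b + 1\<close> columns and of
  \<open>b + 1\<close> rows. Counting with \<open>b\<^sub>2\<close> shows that the neighbours of \<open>z\<close> at distance 2 from \<open>x\<close>
  are exactly those outside them sharing a column with them, or sharing a row but no column. So
  \<open>B = \<Gamma>\<^sub>2(x) \<inter> M\<close> consists of \<open>z\<close> and the vertices in the row of \<open>M\<close> lying in those \<open>b + 1\<close>
  columns: the lines through \<open>z\<close> meet \<open>B\<close> in \<open>b + 1\<close> blocks of size \<open>\<alpha> + 1\<close>, and any two points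
  of \<open>M\<close> lie on a unique line. Double counting flags gives \<open>(\<alpha> + 1) | (\<alpha>(b + 1) + 1)(b + 1)\<close>,
  that is, \<open>(\<alpha> + 1) | b(b + 1)\<close>.\<close>

section \<open>Double counting and a spectral bound\<close>

lemma card_eq_card_image_mult:
  assumes "finite A" and "\<And>a. a \<in> A \<Longrightarrow> card {a' \<in> A. f a' = f a} = c"
  shows "card A = card (f ` A) * c"
proof -
  have "(\<Sum>a\<in>A. card {y \<in> f ` A. f a = y}) = c * card (f ` A)"
    by (rule sum_multicount) (use assms in auto)
  moreover have "{y \<in> f ` A. f a = y} = {f a}" if "a \<in> A" for a
    using that by auto
  ultimately show ?thesis by (simp add: mult.commute)
qed

lemma adj_eigenvalue_is_char_poly_root:
  fixes g :: "nat \<Rightarrow> 'a"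
  assumes g: "bij_betw g {..<n} V" and ev: "adj_eigenvalue V E \<theta>"
  defines "A \<equiv> mat n n (\<lambda>(i, j). if E (g i) (g j) then 1 else 0) :: real mat"
  shows "poly (char_poly A) \<theta> = 0"
proof -
  obtain v where v0: "\<exists>x\<in>V. v x \<noteq> 0" and v: "\<And>x. x \<in> V \<Longrightarrow> (\<Sum>y\<in>{y\<in>V. E x y}. v y) = \<theta> * v x"
    using ev unfolding adj_eigenvalue_def by blast
  define w where "w = vec n (\<lambda>i. v (g i))"
  have A: "A \<in> carrier_mat n n" unfolding A_def by simp
  have "w \<noteq> 0\<^sub>v n"
  proof
    assume "w = 0\<^sub>v n"
    moreover obtain i where "i < n" "v (g i) \<noteq> 0"
      using v0 g unfolding bij_betw_def by fastforce
    ultimately show False unfolding w_def by (metis index_vec index_zero_vec(1))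
  qed
  moreover have "A *\<^sub>v w = \<theta> \<cdot>\<^sub>v w"
  proof (rule eq_vecI)
    fix i assume "i < dim_vec (\<theta> \<cdot>\<^sub>v w)"
    then have i: "i < n" unfolding w_def by simp
    have "(A *\<^sub>v w) $ i = (\<Sum>j<n. if E (g i) (g j) then v (g j) else 0)"
      using i unfolding A_def w_def by (auto simp: scalar_prod_def atLeast0LessThan intro: sum.cong)
    also have "\<dots> = (\<Sum>j\<in>{j\<in>{..<n}. E (g i) (g j)}. v (g j))"
      by (rule sum.inter_filter[symmetric]) simp
    also have "\<dots> = (\<Sum>y\<in>{y\<in>V. E (g i) y}. v y)"
      using g by (intro sum.reindex_bij_betw) (auto simp: bij_betw_def inj_on_def)
    also have "\<dots> = (\<theta> \<cdot>\<^sub>v w) $ i"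
      using v[of "g i"] g i unfolding w_def bij_betw_def by auto
    finally show "(A *\<^sub>v w) $ i = (\<theta> \<cdot>\<^sub>v w) $ i" .
  qed (simp add: A_def w_def)
  moreover have "w \<in> carrier_vec n" unfolding w_def by simp
  ultimately have "eigenvalue A \<theta>"
    unfolding eigenvalue_def eigenvector_def using A by blast
  then show ?thesis using eigenvalue_root_char_poly[OF A] by simp
qed

lemma finite_adj_eigenvalues:
  assumes "finite V"
  shows "finite {\<theta>. adj_eigenvalue V E \<theta>}"
proof -
  obtain g where g: "bij_betw g {..<card V} V"
    using ex_bij_betw_nat_finite[OF assms] by (auto simp: atLeast0LessThan)
  define A where "A = (mat (card V) (card V) (\<lambda>(i, j). if E (g i) (g j) then 1 else 0) :: real mat)"
  have "char_poly A \<noteq> 0"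
    using degree_monic_char_poly[of A "card V"] unfolding A_def by auto
  moreover have "{\<theta>. adj_eigenvalue V E \<theta>} \<subseteq> {\<theta>. poly (char_poly A) \<theta> = 0}"
    using adj_eigenvalue_is_char_poly_root[OF g] unfolding A_def by blast
  ultimately show ?thesis using poly_roots_finite finite_subset by blast
qed

lemma sum_square_eq_sum_indicator:
  fixes v :: "'a \<Rightarrow> real"
  assumes "finite V" and "K \<subseteq> V"
  shows "(\<Sum>u\<in>K. v u)\<^sup>2 = (\<Sum>u\<in>V. \<Sum>w\<in>V. of_bool (u \<in> K \<and> w \<in> K) * (v u * v w))"
proof -
  have "(\<Sum>u\<in>K. v u)\<^sup>2 = (\<Sum>u\<in>K. \<Sum>w\<in>K. v u * v w)"
    by (simp add: power2_eq_square sum_product)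
  also have "\<dots> = (\<Sum>u\<in>V. of_bool (u \<in> K) * (\<Sum>w\<in>V. of_bool (w \<in> K) * (v u * v w)))"
  proof -
    have "V \<inter> {x. x \<in> K} = K" using assms(2) by blast
    then show ?thesis using assms(1) by simp
  qed
  finally show ?thesis by (simp add: sum_distrib_left of_bool_conj mult_ac)
qed

text \<open>If a family of cliques covers every edge once and every vertex \<open>r\<close> times, its incidence
  matrix \<open>N\<close> satisfies \<open>N N\<^sup>T = A + r I\<close>, and \<open>A + r I\<close> is positive semidefinite.\<close>
lemma adj_eigenvalue_ge_neg_clique_cover:
  fixes L :: "'a set set" and r :: nat
  assumes V: "finite V" and L: "finite L" "\<forall>K\<in>L. K \<subseteq> V" and irrefl: "\<And>u. \<not> E u u"
    and cover: "\<And>u w. u \<in> V \<Longrightarrow> w \<in> V \<Longrightarrow>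
      card {K \<in> L. u \<in> K \<and> w \<in> K} = (if u = w then r else if E u w then 1 else 0)"
    and ev: "adj_eigenvalue V E \<theta>"
  shows "- real r \<le> \<theta>"
proof -
  obtain v where v0: "\<exists>x\<in>V. v x \<noteq> 0" and v: "\<And>x. x \<in> V \<Longrightarrow> (\<Sum>y\<in>{y\<in>V. E x y}. v y) = \<theta> * v x"
    using ev unfolding adj_eigenvalue_def by blast
  have row_sum: "(\<Sum>w\<in>V. real (card {K \<in> L. u \<in> K \<and> w \<in> K}) * (v u * v w)) = (real r + \<theta>) * (v u)\<^sup>2"
    if u: "u \<in> V" for u
  proof -
    have "(\<Sum>w\<in>V. real (card {K \<in> L. u \<in> K \<and> w \<in> K}) * (v u * v w))
        = (\<Sum>w\<in>V. of_bool (w = u) * (real r * (v u * v w)) + of_bool (E u w) * (v u * v w))"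
      using cover[OF u] irrefl[of u] by (intro sum.cong) auto
    also have "\<dots> = real r * (v u * v u) + v u * (\<Sum>y\<in>{y\<in>V. E u y}. v y)"
    proof -
      have "V \<inter> {w. w = u} = {u}" "V \<inter> {w. E u w} = {y\<in>V. E u y}" using u by auto
      then show ?thesis using V by (simp add: sum.distrib sum_distrib_left)
    qed
    finally show ?thesis using v[OF u] by (simp add: power2_eq_square algebra_simps)
  qed
  have "0 \<le> (\<Sum>K\<in>L. (\<Sum>u\<in>K. v u)\<^sup>2)"
    by (simp add: sum_nonneg)
  also have "\<dots> = (\<Sum>K\<in>L. \<Sum>u\<in>V. \<Sum>w\<in>V. of_bool (u \<in> K \<and> w \<in> K) * (v u * v w))"
    using sum_square_eq_sum_indicator[OF V] L(2) by simp
  also have "\<dots> = (\<Sum>u\<in>V. \<Sum>w\<in>V. \<Sum>K\<in>L. of_bool (u \<in> K \<and> w \<in> K) * (v u * v w))"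
    by (subst sum.swap, intro sum.cong refl) (rule sum.swap)
  also have "\<dots> = (\<Sum>u\<in>V. (real r + \<theta>) * (v u)\<^sup>2)"
    using L(1) row_sum by (simp add: sum_distrib_right[symmetric] Int_def)
  finally have "0 \<le> (real r + \<theta>) * (\<Sum>u\<in>V. (v u)\<^sup>2)"
    by (simp add: sum_distrib_left)
  moreover have "0 < (\<Sum>u\<in>V. (v u)\<^sup>2)"
    using v0 V by (metis sum_pos2 zero_less_power2 zero_le_power2)
  ultimately show ?thesis by (simp add: zero_le_mult_iff)
qed

section \<open>Distances in connected graphs\<close>

locale simple_conn_graph =
  fixes V :: "'a set" and E :: "'a \<Rightarrow> 'a \<Rightarrow> bool"
  assumes simple: "simple_graph V E" and connected: "connected_graph V E"
begin

definition N :: "'a \<Rightarrow> 'a set" where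
  "N y = {u \<in> V. E y u}"

lemma finite_V: "finite V" and V_ne: "V \<noteq> {}" and E_sym: "E x y \<Longrightarrow> E y x"
  and E_irrefl: "\<not> E x x"
  using simple unfolding simple_graph_def by auto

lemma E_commute: "E x y \<longleftrightarrow> E y x"
  using E_sym by blast

lemma gdist_relpow: "x \<in> V \<Longrightarrow> y \<in> V \<Longrightarrow> (adj V E ^^ gdist V E x y) x y"
  using connected unfolding gdist_def connected_graph_def by (auto intro: LeastI_ex)

lemma gdist_le_relpow: "(adj V E ^^ n) x y \<Longrightarrow> gdist V E x y \<le> n"
  unfolding gdist_def by (rule Least_le)

lemma gdist_self [simp]: "gdist V E x x = 0"
  using gdist_le_relpow[of 0 x x] by simp

lemma gdist_eq_0_iff: "x \<in> V \<Longrightarrow> y \<in> V \<Longrightarrow> gdist V E x y = 0 \<longleftrightarrow> x = y"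
  using gdist_relpow[of x y] by auto

lemma gdist_eq_1_iff:
  assumes "x \<in> V" "y \<in> V"
  shows "gdist V E x y = 1 \<longleftrightarrow> E x y"
proof
  assume "gdist V E x y = 1"
  then show "E x y" using gdist_relpow[OF assms] by (simp add: adj_def eq_OO)
next
  assume "E x y"
  then have "gdist V E x y \<le> 1" using assms by (intro gdist_le_relpow) (simp add: adj_def eq_OO)
  moreover have "x \<noteq> y" using \<open>E x y\<close> E_irrefl by blast
  ultimately show "gdist V E x y = 1" using gdist_eq_0_iff[OF assms] by linarith
qed

lemma gdist_le_Suc_edge:
  assumes "x \<in> V" "z \<in> V" "y \<in> V" "E z y"
  shows "gdist V E x y \<le> Suc (gdist V E x z)"
  using assms gdist_relpow[of x z] by (intro gdist_le_relpow) (auto simp: adj_def)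

lemma mem_Gam_iff: "u \<in> Gam V E i x \<longleftrightarrow> u \<in> V \<and> gdist V E x u = i"
  unfolding Gam_def by blast

lemma mem_N_iff: "u \<in> N y \<longleftrightarrow> u \<in> V \<and> E y u"
  unfolding N_def by blast

lemma Gam_1_eq_N:
  assumes "y \<in> V"
  shows "Gam V E 1 y = N y"
  using gdist_eq_1_iff[OF assms] unfolding Gam_def N_def by auto

lemma N_subset_V: "N y \<subseteq> V"
  unfolding N_def by blast

lemma finite_N: "finite (N y)"
  using finite_subset[OF N_subset_V finite_V] .

lemma not_mem_N_self: "y \<notin> N y"
  using E_irrefl unfolding N_def by blast

lemma is_clique_insert:
  assumes "y \<in> V" and "S \<subseteq> N y" and "\<And>u w. u \<in> S \<Longrightarrow> w \<in> S \<Longrightarrow> u \<noteq> w \<Longrightarrow> E u w"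
  shows "is_clique V E (insert y S)"
  unfolding is_clique_def
proof (intro conjI ballI impI)
  show "insert y S \<subseteq> V" using assms(1,2) N_subset_V by blast
next
  fix u w assume "u \<in> insert y S" "w \<in> insert y S" "u \<noteq> w"
  then consider "u = y" "w \<in> S" | "w = y" "u \<in> S" | "u \<in> S" "w \<in> S" by blast
  then show "E u w"
  proof cases
    case 1 then show ?thesis using assms(2) mem_N_iff by blast
  next
    case 2
    then have "E y u" using assms(2) mem_N_iff by blast
    then show ?thesis using 2 E_sym by simp
  next
    case 3 then show ?thesis using assms(3) \<open>u \<noteq> w\<close> by blast
  qed
qed

lemma clique_minus_subset_N:
  assumes "is_clique V E K" and "y \<in> K"
  shows "K - {y} \<subseteq> N y"
proof
  fix u assume "u \<in> K - {y}"
  then show "u \<in> N y" using assms unfolding is_clique_def by (auto simp: mem_N_iff)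
qed

lemma finite_clique: "is_clique V E K \<Longrightarrow> finite K"
  using finite_V unfolding is_clique_def by (blast intro: finite_subset)

end

locale drg =
  fixes V :: "'a set" and E :: "'a \<Rightarrow> 'a \<Rightarrow> bool" and D :: nat and bs cs :: "nat \<Rightarrow> nat"
  assumes distance_regular: "distance_regular V E D bs cs"

sublocale drg \<subseteq> simple_conn_graph
  using distance_regular unfolding distance_regular_def by unfold_locales auto

context drg
begin

lemma card_Gam_pred_inter_N:
  assumes "x \<in> V" "y \<in> V" "gdist V E x y = i" "1 \<le> i" "i \<le> D"
  shows "card (Gam V E (i - 1) x \<inter> N y) = cs i"
proof -
  have "card (Gam V E (i - 1) x \<inter> Gam V E 1 y) = cs i"
    using distance_regular assms unfolding distance_regular_def by blast
  then show ?thesis using Gam_1_eq_N[OF assms(2)] by simp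
qed

lemma card_Gam_Suc_inter_N:
  assumes "x \<in> V" "y \<in> V" "gdist V E x y = i" "i < D"
  shows "card (Gam V E (i + 1) x \<inter> N y) = bs i"
proof -
  have "card (Gam V E (i + 1) x \<inter> Gam V E 1 y) = bs i"
    using distance_regular assms unfolding distance_regular_def by blast
  then show ?thesis using Gam_1_eq_N[OF assms(2)] by simp
qed

end

section \<open>Local grids\<close>

locale local_grid = simple_conn_graph +
  fixes \<alpha> m r :: nat
  assumes local_ext_grid: "\<forall>y\<in>V. local_is_ext_grid V E y \<alpha> m r"
begin

text \<open>The last coordinate of \<open>grid_iso y u\<close> only separates the \<open>\<alpha>\<close> vertices replacing one grid
  vertex; \<open>cell y u\<close> is that grid vertex.\<close>
definition grid_iso :: "'a \<Rightarrow> 'a \<Rightarrow> (nat \<times> nat) \<times> nat" where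
  "grid_iso y = (SOME f. bij_betw f (N y) (ext_grid_vertices \<alpha> m r) \<and>
     (\<forall>u\<in>N y. \<forall>w\<in>N y. E u w \<longleftrightarrow> ext_grid_adj (f u) (f w)))"

definition cell :: "'a \<Rightarrow> 'a \<Rightarrow> nat \<times> nat" where
  "cell y u = fst (grid_iso y u)"

definition nbrs_in :: "'a \<Rightarrow> (nat \<times> nat) set \<Rightarrow> 'a set" where
  "nbrs_in y P = {u \<in> N y. cell y u \<in> P}"

definition row :: "'a \<Rightarrow> nat \<Rightarrow> 'a set" where
  "row y i = {u \<in> N y. fst (cell y u) = i}"

definition col :: "'a \<Rightarrow> nat \<Rightarrow> 'a set" where
  "col y j = {u \<in> N y. snd (cell y u) = j}"

lemma grid_iso:
  assumes "y \<in> V"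
  shows "bij_betw (grid_iso y) (N y) (ext_grid_vertices \<alpha> m r)"
    and "\<And>u w. u \<in> N y \<Longrightarrow> w \<in> N y \<Longrightarrow> E u w \<longleftrightarrow> ext_grid_adj (grid_iso y u) (grid_iso y w)"
proof -
  have "\<exists>f. bij_betw f (N y) (ext_grid_vertices \<alpha> m r) \<and>
      (\<forall>u\<in>N y. \<forall>w\<in>N y. E u w \<longleftrightarrow> ext_grid_adj (f u) (f w))"
    using local_ext_grid assms unfolding local_is_ext_grid_def Gam_1_eq_N[OF assms, symmetric] by blast
  from someI_ex[OF this] show "bij_betw (grid_iso y) (N y) (ext_grid_vertices \<alpha> m r)"
    and "\<And>u w. u \<in> N y \<Longrightarrow> w \<in> N y \<Longrightarrow> E u w \<longleftrightarrow> ext_grid_adj (grid_iso y u) (grid_iso y w)"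
    unfolding grid_iso_def by blast+
qed

lemma cell_bound:
  assumes "y \<in> V" "u \<in> N y"
  shows "fst (cell y u) < m \<and> snd (cell y u) < r"
proof -
  have "grid_iso y u \<in> ({..<m} \<times> {..<r}) \<times> {..<\<alpha>}"
    using bij_betwE[OF grid_iso(1)[OF assms(1)]] assms(2) unfolding ext_grid_vertices_def by blast
  then show ?thesis by (simp add: cell_def mem_Times_iff)
qed

lemma E_iff_cell:
  assumes "y \<in> V" "u \<in> N y" "w \<in> N y"
  shows "E u w \<longleftrightarrow> u \<noteq> w \<and> (fst (cell y u) = fst (cell y w) \<or> snd (cell y u) = snd (cell y w))"
proof -
  have inj: "grid_iso y u = grid_iso y w \<longleftrightarrow> u = w"
    using grid_iso(1)[OF assms(1)] assms(2,3) unfolding bij_betw_def inj_on_def by blast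
  show ?thesis
    unfolding grid_iso(2)[OF assms] ext_grid_adj_def grid_adj_def cell_def inj[symmetric]
    by (auto simp: prod_eq_iff)
qed

lemma grid_iso_image_nbrs_in:
  assumes y: "y \<in> V" and P: "P \<subseteq> {..<m} \<times> {..<r}"
  shows "grid_iso y ` nbrs_in y P = P \<times> {..<\<alpha>}"
proof
  show "grid_iso y ` nbrs_in y P \<subseteq> P \<times> {..<\<alpha>}"
  proof
    fix q assume "q \<in> grid_iso y ` nbrs_in y P"
    then obtain u where u: "u \<in> N y" "cell y u \<in> P" "q = grid_iso y u"
      unfolding nbrs_in_def by blast
    then have "q \<in> ext_grid_vertices \<alpha> m r" using bij_betwE[OF grid_iso(1)[OF y]] by blast
    then show "q \<in> P \<times> {..<\<alpha>}"
      using u unfolding ext_grid_vertices_def cell_def by (simp add: mem_Times_iff)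
  qed
  show "P \<times> {..<\<alpha>} \<subseteq> grid_iso y ` nbrs_in y P"
  proof
    fix q assume q: "q \<in> P \<times> {..<\<alpha>}"
    then have "q \<in> ext_grid_vertices \<alpha> m r"
      using P unfolding ext_grid_vertices_def by (auto simp: mem_Times_iff)
    then obtain u where "u \<in> N y" "q = grid_iso y u"
      using bij_betw_imp_surj_on[OF grid_iso(1)[OF y]] by (metis imageE)
    then show "q \<in> grid_iso y ` nbrs_in y P"
      using q unfolding nbrs_in_def cell_def by (auto simp: mem_Times_iff)
  qed
qed

lemma card_nbrs_in:
  assumes y: "y \<in> V" and P: "P \<subseteq> {..<m} \<times> {..<r}"
  shows "card (nbrs_in y P) = card P * \<alpha>"
proof -
  have "nbrs_in y P \<subseteq> N y" unfolding nbrs_in_def by blast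
  then have "bij_betw (grid_iso y) (nbrs_in y P) (P \<times> {..<\<alpha>})"
    using bij_betw_subset[OF grid_iso(1)[OF y]] grid_iso_image_nbrs_in[OF assms] by blast
  then show ?thesis by (simp add: bij_betw_same_card card_cartesian_product)
qed

lemma finite_nbrs_in: "finite (nbrs_in y P)"
  unfolding nbrs_in_def using finite_N by simp

lemma nbrs_in_subset_N: "nbrs_in y P \<subseteq> N y"
  unfolding nbrs_in_def by blast

lemma row_eq_nbrs_in: "y \<in> V \<Longrightarrow> row y i = nbrs_in y ({i} \<times> {..<r})"
  unfolding row_def nbrs_in_def using cell_bound by (auto simp: mem_Times_iff)

lemma col_eq_nbrs_in: "y \<in> V \<Longrightarrow> col y j = nbrs_in y ({..<m} \<times> {j})"
  unfolding col_def nbrs_in_def using cell_bound by (auto simp: mem_Times_iff)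

lemma N_eq_nbrs_in: "y \<in> V \<Longrightarrow> N y = nbrs_in y ({..<m} \<times> {..<r})"
  unfolding nbrs_in_def using cell_bound by (auto simp: mem_Times_iff)

lemma card_row:
  assumes "y \<in> V" "i < m"
  shows "card (row y i) = r * \<alpha>"
proof -
  have "{i} \<times> {..<r} \<subseteq> {..<m} \<times> {..<r}" using assms(2) by blast
  then show ?thesis
    using card_nbrs_in[OF assms(1)] by (simp add: row_eq_nbrs_in[OF assms(1)] card_cartesian_product)
qed

lemma card_col:
  assumes "y \<in> V" "j < r"
  shows "card (col y j) = m * \<alpha>"
proof -
  have "{..<m} \<times> {j} \<subseteq> {..<m} \<times> {..<r}" using assms(2) by blast
  then show ?thesis
    using card_nbrs_in[OF assms(1)] by (simp add: col_eq_nbrs_in[OF assms(1)] card_cartesian_product)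
qed

lemma card_N: "y \<in> V \<Longrightarrow> card (N y) = m * r * \<alpha>"
  using card_nbrs_in[of y "{..<m} \<times> {..<r}"] N_eq_nbrs_in[of y] by (simp add: card_cartesian_product)

lemma row_subset_N: "row y i \<subseteq> N y"
  unfolding row_def by blast

lemma col_subset_N: "col y j \<subseteq> N y"
  unfolding col_def by blast

lemma finite_row: "finite (row y i)"
  using finite_subset[OF row_subset_N finite_N] .

lemma finite_col: "finite (col y j)"
  using finite_subset[OF col_subset_N finite_N] .

lemma is_clique_insert_row: "y \<in> V \<Longrightarrow> is_clique V E (insert y (row y i))"
  by (rule is_clique_insert) (auto simp: row_def E_iff_cell)

lemma is_clique_insert_col: "y \<in> V \<Longrightarrow> is_clique V E (insert y (col y j))"
  by (rule is_clique_insert) (auto simp: col_def E_iff_cell)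

lemma local_clique_in_row_or_col:
  assumes y: "y \<in> V" and S: "S \<subseteq> N y" "S \<noteq> {}"
    and clique: "\<And>u w. u \<in> S \<Longrightarrow> w \<in> S \<Longrightarrow> u \<noteq> w \<Longrightarrow> E u w"
  shows "(\<exists>i<m. S \<subseteq> row y i) \<or> (\<exists>j<r. S \<subseteq> col y j)"
proof (cases "\<exists>u\<in>S. \<exists>w\<in>S. snd (cell y u) \<noteq> snd (cell y w)")
  case False
  obtain u where u: "u \<in> S" using S(2) by blast
  then have "S \<subseteq> col y (snd (cell y u))" using False S(1) unfolding col_def by blast
  then show ?thesis using cell_bound[OF y] u S(1) by blast
next
  case True
  then obtain u w where uw: "u \<in> S" "w \<in> S" "snd (cell y u) \<noteq> snd (cell y w)" by blast
  then have same_row: "fst (cell y u) = fst (cell y w)"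
    using clique[OF uw(1,2)] E_iff_cell[OF y] S(1) by blast
  have "S \<subseteq> row y (fst (cell y u))"
  proof
    fix s assume s: "s \<in> S"
    have sN: "s \<in> N y" and uN: "u \<in> N y" and wN: "w \<in> N y" using s uw S(1) by blast+
    show "s \<in> row y (fst (cell y u))"
    proof (rule ccontr)
      assume "s \<notin> row y (fst (cell y u))"
      then have other_row: "fst (cell y s) \<noteq> fst (cell y u)" using sN unfolding row_def by blast
      then have "E s u" "E s w" using clique s uw(1,2) same_row by auto
      then have "snd (cell y s) = snd (cell y u)" "snd (cell y s) = snd (cell y w)"
        using E_iff_cell[OF y sN uN] E_iff_cell[OF y sN wN] other_row same_row by auto
      then show False using uw(3) by simp
    qed
  qed
  then show ?thesis using cell_bound[OF y] uw(1) S(1) by blast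
qed

lemma E_iff_same_cell:
  assumes "y \<in> V" "u \<in> N y" "v \<in> N y" "w \<in> N y" "cell y u = cell y v" "w \<noteq> u" "w \<noteq> v"
  shows "E w u \<longleftrightarrow> E w v"
  using E_iff_cell[OF assms(1,4,2)] E_iff_cell[OF assms(1,4,3)] assms(5-7) by simp

lemma N_inter_insert_col:
  assumes w: "w \<in> V" and xN: "x \<in> N w" and x_col: "snd (cell w x) \<noteq> j"
  shows "N x \<inter> insert w (col w j) = insert w (nbrs_in w {(fst (cell w x), j)})"
proof -
  have on_col: "u \<in> N x \<longleftrightarrow> cell w u = (fst (cell w x), j)" if u: "u \<in> col w j" for u
  proof -
    have uN: "u \<in> N w" and uj: "snd (cell w u) = j" using u unfolding col_def by auto
    then have "u \<noteq> x" using x_col by blast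
    have "u \<in> V" using uN N_subset_V by blast
    then have "u \<in> N x \<longleftrightarrow> E u x" by (simp add: mem_N_iff E_commute[of x u])
    also have "\<dots> \<longleftrightarrow> fst (cell w u) = fst (cell w x)"
      using E_iff_cell[OF w uN xN] \<open>u \<noteq> x\<close> uj x_col by auto
    finally show ?thesis using uj by (auto simp: prod_eq_iff)
  qed
  have "w \<in> N x" using w xN E_sym by (simp add: mem_N_iff)
  then have "N x \<inter> insert w (col w j) = insert w {u \<in> col w j. u \<in> N x}" by blast
  also have "{u \<in> col w j. u \<in> N x} = nbrs_in w {(fst (cell w x), j)}"
  proof (rule Set.set_eqI)
    fix u
    have "u \<in> nbrs_in w {(fst (cell w x), j)} \<longleftrightarrow> u \<in> col w j \<and> cell w u = (fst (cell w x), j)"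
      unfolding nbrs_in_def col_def by auto
    then show "u \<in> {u \<in> col w j. u \<in> N x} \<longleftrightarrow> u \<in> nbrs_in w {(fst (cell w x), j)}"
      using on_col by blast
  qed
  finally show ?thesis .
qed

lemma card_common_nbrs:
  assumes w: "w \<in> V" and xz: "x \<in> N w" "z \<in> N w" "x \<noteq> z" "\<not> E x z"
  shows "card (N w \<inter> N x \<inter> N z) = 2 * \<alpha>"
proof -
  obtain fx sx fz sz where cx: "cell w x = (fx, sx)" and cz: "cell w z = (fz, sz)"
    by (metis prod.exhaust)
  have ne: "fx \<noteq> fz" "sx \<noteq> sz" using E_iff_cell[OF w xz(1,2)] xz(3,4) cx cz by auto
  have bound: "fx < m" "fz < m" "sx < r" "sz < r" using cell_bound[OF w] xz cx cz by force+
  have "N w \<inter> N x \<inter> N z = nbrs_in w {(fx, sz), (fz, sx)}"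
  proof -
    have "u \<in> N x \<and> u \<in> N z \<longleftrightarrow> cell w u = (fx, sz) \<or> cell w u = (fz, sx)" if u: "u \<in> N w" for u
    proof -
      have "u \<in> N x \<and> u \<in> N z \<longleftrightarrow> E u x \<and> E u z"
        using u N_subset_V by (auto simp: mem_N_iff E_commute[of u])
      also have "\<dots> \<longleftrightarrow> cell w u = (fx, sz) \<or> cell w u = (fz, sx)"
        using E_iff_cell[OF w u xz(1)] E_iff_cell[OF w u xz(2)] cx cz ne by (auto simp: prod_eq_iff)
      finally show ?thesis .
    qed
    then show ?thesis unfolding nbrs_in_def by blast
  qed
  moreover have "card {(fx, sz), (fz, sx)} = 2" using ne by simp
  ultimately show ?thesis using card_nbrs_in[OF w, of "{(fx, sz), (fz, sx)}"] bound by simp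
qed

lemma graph_valency_eq: "graph_valency V E = m * r * \<alpha>"
proof -
  have "(SOME x. x \<in> V) \<in> V" using V_ne by (simp add: some_in_eq)
  then show ?thesis
    using card_N unfolding graph_valency_def valency_def N_def by blast
qed

lemma adj_eigenvalue_valency: "adj_eigenvalue V E (real (m * r * \<alpha>))"
  unfolding adj_eigenvalue_def
proof (intro exI[of _ "\<lambda>_. 1"] conjI ballI)
  show "\<exists>x\<in>V. (1::real) \<noteq> 0" using V_ne by auto
  fix x assume "x \<in> V"
  then show "(\<Sum>y\<in>{y\<in>V. E x y}. 1::real) = real (m * r * \<alpha>) * 1"
    using card_N unfolding N_def by simp
qed

end

section \<open>Lines\<close>

locale grid_lines = local_grid +
  assumes alpha_pos: "1 \<le> \<alpha>" and r_gt_1: "1 < r" and r_less_m: "r < m"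
begin

definition lines :: "'a set set" where
  "lines = {K. is_clique V E K \<and> card K = \<alpha> * m + 1}"

lemma clique_through_in_row_or_col:
  assumes K: "is_clique V E K" and y: "y \<in> K"
  shows "(\<exists>i<m. K - {y} \<subseteq> row y i) \<or> (\<exists>j<r. K - {y} \<subseteq> col y j)"
proof (cases "K - {y} = {}")
  case True
  then show ?thesis using r_gt_1 by auto
next
  case False
  have "y \<in> V" using K y unfolding is_clique_def by blast
  moreover have "\<And>u w. u \<in> K - {y} \<Longrightarrow> w \<in> K - {y} \<Longrightarrow> u \<noteq> w \<Longrightarrow> E u w"
    using K unfolding is_clique_def by blast
  ultimately show ?thesis
    using local_clique_in_row_or_col clique_minus_subset_N[OF K y] False by blast
qed

lemma card_clique_minus_le:
  assumes K: "is_clique V E K" and y: "y \<in> K"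
  shows "card (K - {y}) \<le> \<alpha> * m"
proof -
  have yV: "y \<in> V" using K y unfolding is_clique_def by blast
  from clique_through_in_row_or_col[OF K y] show ?thesis
  proof (elim disjE exE conjE)
    fix i assume "i < m" "K - {y} \<subseteq> row y i"
    then have "card (K - {y}) \<le> card (row y i)" using card_mono[OF finite_row] by blast
    also have "\<dots> = \<alpha> * r" using card_row[OF yV \<open>i < m\<close>] by simp
    also have "\<dots> \<le> \<alpha> * m" using r_less_m by simp
    finally show ?thesis .
  next
    fix j assume "j < r" "K - {y} \<subseteq> col y j"
    then have "card (K - {y}) \<le> card (col y j)" using card_mono[OF finite_col] by blast
    then show ?thesis using card_col[OF yV \<open>j < r\<close>] by (simp add: mult.commute)
  qed
qed

lemma card_clique_le:
  assumes "is_clique V E K"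
  shows "card K \<le> \<alpha> * m + 1"
proof (cases "K = {}")
  case False
  then obtain y where y: "y \<in> K" by blast
  then have "card K = card (K - {y}) + 1" using card.remove[OF finite_clique[OF assms]] by simp
  then show ?thesis using card_clique_minus_le[OF assms y] by simp
qed simp

lemma insert_col_mem_lines:
  assumes "y \<in> V" "j < r"
  shows "insert y (col y j) \<in> lines"
proof -
  have "y \<notin> col y j" using not_mem_N_self col_subset_N by blast
  then have "card (insert y (col y j)) = \<alpha> * m + 1"
    using card_col[OF assms] finite_col by simp
  then show ?thesis using is_clique_insert_col[OF assms(1)] unfolding lines_def by blast
qed

lemma line_eq_insert_col:
  assumes K: "K \<in> lines" and y: "y \<in> K"
  shows "\<exists>j<r. K = insert y (col y j)"
proof -
  have Kc: "is_clique V E K" and cK: "card K = \<alpha> * m + 1" using K unfolding lines_def by auto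
  have yV: "y \<in> V" using Kc y unfolding is_clique_def by blast
  have card_K_y: "card (K - {y}) = \<alpha> * m" using cK y finite_clique[OF Kc] by simp
  from clique_through_in_row_or_col[OF Kc y] show ?thesis
  proof (elim disjE exE conjE)
    fix i assume "i < m" "K - {y} \<subseteq> row y i"
    then have "card (K - {y}) \<le> card (row y i)" using card_mono[OF finite_row] by blast
    also have "\<dots> = \<alpha> * r" using card_row[OF yV \<open>i < m\<close>] by simp
    finally show ?thesis using card_K_y r_less_m alpha_pos by simp
  next
    fix j assume j: "j < r" "K - {y} \<subseteq> col y j"
    then have "K - {y} = col y j"
      using card_subset_eq[OF finite_col] card_col[OF yV j(1)] card_K_y by (metis mult.commute)
    then show ?thesis using y j(1) by blast
  qed
qed

lemma col_ne_empty: "y \<in> V \<Longrightarrow> j < r \<Longrightarrow> col y j \<noteq> {}"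
  using card_col[of y j] alpha_pos r_less_m by auto

lemma card_lines_through:
  assumes y: "y \<in> V"
  shows "card {K \<in> lines. y \<in> K} = r"
proof -
  have "{K \<in> lines. y \<in> K} = (\<lambda>j. insert y (col y j)) ` {..<r}"
    using line_eq_insert_col insert_col_mem_lines[OF y] by blast
  moreover have "inj_on (\<lambda>j. insert y (col y j)) {..<r}"
  proof (rule inj_onI)
    fix j1 j2 assume j: "j1 \<in> {..<r}" "j2 \<in> {..<r}" and eq: "insert y (col y j1) = insert y (col y j2)"
    have "y \<notin> col y j1" "y \<notin> col y j2" using not_mem_N_self col_subset_N by blast+
    then have "col y j1 = col y j2" using eq by (simp add: insert_ident)
    moreover obtain u where "u \<in> col y j1" using col_ne_empty[OF y] j by blast
    ultimately show "j1 = j2" unfolding col_def by auto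
  qed
  ultimately show ?thesis by (simp add: card_image)
qed

lemma ex1_line_through_edge:
  assumes u: "u \<in> V" and w: "w \<in> V" and uw: "E u w"
  shows "\<exists>!K. K \<in> lines \<and> u \<in> K \<and> w \<in> K"
proof -
  have wN: "w \<in> N u" using w uw by (simp add: mem_N_iff)
  define j where "j = snd (cell u w)"
  have j: "j < r" using cell_bound[OF u wN] unfolding j_def by blast
  have w_col: "w \<in> col u j" using wN unfolding col_def j_def by blast
  show ?thesis
  proof (rule ex1I[of _ "insert u (col u j)"])
    show "insert u (col u j) \<in> lines \<and> u \<in> insert u (col u j) \<and> w \<in> insert u (col u j)"
      using insert_col_mem_lines[OF u j] w_col by blast
  next
    fix K assume K: "K \<in> lines \<and> u \<in> K \<and> w \<in> K"
    then obtain j' where "K = insert u (col u j')" using line_eq_insert_col by blast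
    moreover have "w \<noteq> u" using uw E_irrefl by blast
    ultimately have "w \<in> col u j'" using K by blast
    then have "j' = j" using w_col unfolding col_def by auto
    then show "K = insert u (col u j)" using \<open>K = insert u (col u j')\<close> by simp
  qed
qed

lemma card_lines_containing:
  assumes u: "u \<in> V" and w: "w \<in> V"
  shows "card {K \<in> lines. u \<in> K \<and> w \<in> K} = (if u = w then r else if E u w then 1 else 0)"
proof -
  consider "u = w" | "u \<noteq> w" "E u w" | "u \<noteq> w" "\<not> E u w" by blast
  then show ?thesis
  proof cases
    case 1
    then show ?thesis using card_lines_through[OF u] by simp
  next
    case 2
    then obtain K0 where "K0 \<in> lines \<and> u \<in> K0 \<and> w \<in> K0"
      and "\<And>K. K \<in> lines \<and> u \<in> K \<and> w \<in> K \<Longrightarrow> K = K0"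
      using ex1_line_through_edge[OF u w] by blast
    then have "{K \<in> lines. u \<in> K \<and> w \<in> K} = {K0}" by blast
    then show ?thesis using 2 by simp
  next
    case 3
    then have "{K \<in> lines. u \<in> K \<and> w \<in> K} = {}" unfolding lines_def is_clique_def by blast
    then show ?thesis using 3 by (metis card.empty)
  qed
qed

lemma finite_lines: "finite lines"
proof -
  have "lines \<subseteq> Pow V" unfolding lines_def is_clique_def by blast
  then show ?thesis using finite_V by (meson finite_Pow_iff finite_subset)
qed

lemma theta_min_ge: "- real r \<le> theta_min V E"
proof -
  have lines_bound: "- real r \<le> \<theta>" if "adj_eigenvalue V E \<theta>" for \<theta>
  proof (rule adj_eigenvalue_ge_neg_clique_cover[OF finite_V finite_lines _ E_irrefl _ that])
    show "\<forall>K\<in>lines. K \<subseteq> V" unfolding lines_def is_clique_def by blast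
  qed (rule card_lines_containing)
  have "theta_min V E \<in> {\<theta>. adj_eigenvalue V E \<theta>}"
    unfolding theta_min_def using adj_eigenvalue_valency finite_adj_eigenvalues[OF finite_V]
    by (intro Min_in) auto
  then show ?thesis using lines_bound by blast
qed

lemma ex_nbr_in_cell:
  assumes "y \<in> V" "i < m" "j < r"
  shows "\<exists>u \<in> N y. cell y u = (i, j)"
proof -
  have "card (nbrs_in y {(i, j)}) = \<alpha>" using card_nbrs_in[OF assms(1), of "{(i, j)}"] assms(2,3) by simp
  then have "nbrs_in y {(i, j)} \<noteq> {}" using alpha_pos by auto
  then show ?thesis unfolding nbrs_in_def by blast
qed

text \<open>Both \<open>u\<close> and \<open>w\<close> lie on the line \<open>y + col\<close> and on the clique \<open>y + row\<close>; seen from \<open>u\<close>,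
  the latter cannot be part of the former.\<close>
lemma cell_twins:
  assumes y: "y \<in> V" and uw: "u \<in> N y" "w \<in> N y" "u \<noteq> w" and same: "cell y u = cell y w"
  shows "cell u y = cell u w"
proof -
  obtain i j where ij: "cell y u = (i, j)" by fastforce
  have bound: "i < m" "j < r" using cell_bound[OF y uw(1)] ij by auto
  define L where "L = insert y (col y j)"
  define R where "R = insert y (row y i)"
  have L: "L \<in> lines" unfolding L_def using insert_col_mem_lines[OF y bound(2)] .
  have R: "is_clique V E R" unfolding R_def using is_clique_insert_row[OF y] .
  have u_not_y: "u \<noteq> y" using uw(1) not_mem_N_self by blast
  have uwL: "u \<in> L" "w \<in> L" unfolding L_def col_def using uw ij same by auto
  have yw_R: "y \<in> R - {u}" "w \<in> R - {u}" "u \<in> R"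
    unfolding R_def row_def using uw ij same u_not_y by auto
  obtain j1 where L_at_u: "L = insert u (col u j1)" using line_eq_insert_col[OF L uwL(1)] by blast
  have "y \<in> L" unfolding L_def by simp
  then have yw_col: "y \<in> col u j1" "w \<in> col u j1"
    using uwL(2) uw(3) u_not_y unfolding L_at_u by auto
  from clique_through_in_row_or_col[OF R yw_R(3)] show ?thesis
  proof (elim disjE exE conjE)
    fix i' assume "R - {u} \<subseteq> row u i'"
    then have "fst (cell u y) = fst (cell u w)" using yw_R(1,2) unfolding row_def by auto
    moreover have "snd (cell u y) = snd (cell u w)" using yw_col unfolding col_def by auto
    ultimately show ?thesis by (simp add: prod_eq_iff)
  next
    fix j' assume R_col: "R - {u} \<subseteq> col u j'"
    then have "j' = j1" using yw_R(1) yw_col(1) unfolding col_def by auto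
    then have R_L: "R \<subseteq> L" using R_col yw_R(3) unfolding L_at_u by blast
    define j2 :: nat where "j2 = (if j = 0 then 1 else 0)"
    have j2: "j2 < r" "j2 \<noteq> j" unfolding j2_def using r_gt_1 by auto
    then obtain v where v: "v \<in> N y" "cell y v = (i, j2)" using ex_nbr_in_cell[OF y bound(1)] by blast
    then have "v \<in> L" using R_L unfolding R_def row_def by auto
    then have "v \<in> col y j" using v(1) not_mem_N_self unfolding L_def by blast
    then show ?thesis using v(2) j2(2) unfolding col_def by simp
  qed
qed

lemma card_N_inter_line:
  assumes x: "x \<in> V" and L: "L \<in> lines" and xL: "x \<notin> L" and w: "w \<in> L" and xw: "E x w"
  shows "card (N x \<inter> L) = \<alpha> + 1"
proof -
  obtain j where j: "j < r" and L_eq: "L = insert w (col w j)"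
    using line_eq_insert_col[OF L w] by blast
  have wV: "w \<in> V" using L w unfolding lines_def is_clique_def by blast
  have xN: "x \<in> N w" using x xw E_sym by (simp add: mem_N_iff)
  have "snd (cell w x) \<noteq> j" using xL xN unfolding L_eq col_def by blast
  then have "N x \<inter> L = insert w (nbrs_in w {(fst (cell w x), j)})"
    unfolding L_eq by (rule N_inter_insert_col[OF wV xN])
  moreover have "card (nbrs_in w {(fst (cell w x), j)}) = \<alpha>"
    using card_nbrs_in[OF wV, of "{(fst (cell w x), j)}"] cell_bound[OF wV xN] j by simp
  moreover have "w \<notin> nbrs_in w {(fst (cell w x), j)}" using not_mem_N_self nbrs_in_subset_N by blast
  ultimately show ?thesis using finite_nbrs_in by simp
qed

end

section \<open>Delsarte cliques\<close>

locale grid_geometric = grid_lines +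
  fixes Cs :: "'a set set"
  assumes geometric: "geometric_wrt V E Cs"
begin

lemma card_Cs:
  assumes "K \<in> Cs"
  shows "is_clique V E K" and "real (card K) = 1 + real (m * r * \<alpha>) / (- theta_min V E)"
  using geometric assms graph_valency_eq unfolding geometric_wrt_def delsarte_clique_def by auto

lemma ex_Cs_through_edge:
  assumes "u \<in> V" "w \<in> V" "E u w"
  shows "\<exists>K\<in>Cs. u \<in> K \<and> w \<in> K"
  using geometric assms unfolding geometric_wrt_def by blast

lemma theta_min_neg: "theta_min V E < 0"
proof (rule ccontr)
  assume "\<not> theta_min V E < 0"
  then have nonpos: "real (m * r * \<alpha>) / (- theta_min V E) \<le> 0"
    by (simp add: divide_nonneg_nonpos)
  obtain y where y: "y \<in> V" using V_ne by blast
  have "card (N y) > 0" using card_N[OF y] alpha_pos r_gt_1 r_less_m by simp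
  then obtain u where u: "u \<in> N y" by (metis card_gt_0_iff ex_in_conv)
  then obtain K where K: "K \<in> Cs" "y \<in> K" "u \<in> K"
    using ex_Cs_through_edge[OF y] by (auto simp: mem_N_iff)
  have "card {y, u} \<le> card K"
    using K card_Cs(1)[OF K(1)] by (intro card_mono finite_clique) auto
  moreover have "y \<noteq> u" using u not_mem_N_self by blast
  ultimately show False using card_Cs(2)[OF K(1)] nonpos by simp
qed

lemma Cs_subset_lines: "Cs \<subseteq> lines"
proof
  fix K assume K: "K \<in> Cs"
  have "real (m * r * \<alpha>) / real r \<le> real (m * r * \<alpha>) / (- theta_min V E)"
    using theta_min_neg theta_min_ge r_gt_1 by (intro divide_left_mono) (auto simp: mult_pos_neg)
  also have "real (m * r * \<alpha>) / real r = real (\<alpha> * m)" using r_gt_1 by simp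
  finally have "\<alpha> * m + 1 \<le> card K" using card_Cs(2)[OF K] by linarith
  then show "K \<in> lines"
    using card_clique_le[OF card_Cs(1)[OF K]] card_Cs(1)[OF K] unfolding lines_def by simp
qed

lemma Cs_eq_lines: "Cs = lines"
proof
  show "lines \<subseteq> Cs"
  proof
    fix K assume K: "K \<in> lines"
    then have "card K \<ge> 2" using alpha_pos r_gt_1 r_less_m unfolding lines_def by simp
    then obtain T where "T \<subseteq> K" "card T = 2" by (meson obtain_subset_with_card_n)
    then obtain u w where uw: "u \<in> K" "w \<in> K" "u \<noteq> w" by (auto simp: card_2_iff)
    then have uwV: "u \<in> V" "w \<in> V" and "E u w" using K unfolding lines_def is_clique_def by auto
    then obtain K' where "K' \<in> Cs" "u \<in> K'" "w \<in> K'" using ex_Cs_through_edge by blast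
    then show "K \<in> Cs" using ex1_line_through_edge[OF uwV \<open>E u w\<close>] Cs_subset_lines K uw by blast
  qed
qed (rule Cs_subset_lines)

end

section \<open>The assembly seen from a vertex at distance 2\<close>

locale assembly_design = grid_geometric V E \<alpha> m r Cs + drg V E D bs cs
  for V :: "'a set" and E \<alpha> m r Cs D bs cs +
  fixes b :: nat and M :: "'a set" and x :: 'a
  assumes c2_eq: "cs 2 = (b + 1) * (\<alpha> + 1)"
    and b2_eq: "bs 2 = (r - (b + 1)) * (\<alpha> * m - \<alpha> * (b + 1))"
    and D_gt_2: "2 < D"
    and assembly: "assembly V E Cs M"
    and x: "x \<in> V" and set_dist_x_M: "set_dist V E x M = 2"
begin

definition B :: "'a set" where
  "B = Gam V E 2 x \<inter> M"

definition blocks :: "'a set set" where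
  "blocks = {l \<inter> B | l. l \<in> Cs \<and> 2 \<le> card (l \<inter> B)}"

lemma M_clique: "is_clique V E M"
  and M_maximal: "\<And>K. is_clique V E K \<Longrightarrow> M \<subseteq> K \<Longrightarrow> K = M"
  and M_not_Cs: "M \<notin> Cs"
  using assembly unfolding assembly_def maximal_clique_def by auto

lemma M_subset_V: "M \<subseteq> V"
  using M_clique unfolding is_clique_def by blast

lemma M_ne: "M \<noteq> {}"
proof
  assume "M = {}"
  obtain v where "v \<in> V" using V_ne by blast
  then have "is_clique V E {v}" unfolding is_clique_def by blast
  then show False using M_maximal \<open>M = {}\<close> by blast
qed

lemma gdist_M_ge_2: "u \<in> M \<Longrightarrow> 2 \<le> gdist V E x u"
  using set_dist_x_M finite_clique[OF M_clique] unfolding set_dist_def by (metis Min_le finite_imageI imageI)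

lemma ex_M_gdist_2: "\<exists>z\<in>M. gdist V E x z = 2"
proof -
  have "Min (gdist V E x ` M) \<in> gdist V E x ` M"
    using finite_clique[OF M_clique] M_ne by (intro Min_in) auto
  then show ?thesis using set_dist_x_M unfolding set_dist_def by auto
qed

lemma M_eq_insert_row:
  assumes z: "z \<in> M"
  shows "\<exists>i<m. M = insert z (row z i)"
proof -
  have zV: "z \<in> V" using z M_subset_V by blast
  from clique_through_in_row_or_col[OF M_clique z] show ?thesis
  proof (elim disjE exE conjE)
    fix i assume "i < m" "M - {z} \<subseteq> row z i"
    then show ?thesis using M_maximal[OF is_clique_insert_row[OF zV]] by blast
  next
    fix j assume j: "j < r" "M - {z} \<subseteq> col z j"
    have "insert z (col z j) \<in> Cs" using insert_col_mem_lines[OF zV j(1)] Cs_eq_lines by simp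
    moreover have "insert z (col z j) = M"
      using M_maximal[OF is_clique_insert_col[OF zV]] j(2) by blast
    ultimately show ?thesis using M_not_Cs by simp
  qed
qed

lemma finite_B: "finite B"
  unfolding B_def using finite_clique[OF M_clique] by simp

lemma mem_blocks_iff: "X \<in> blocks \<longleftrightarrow> (\<exists>l\<in>Cs. X = l \<inter> B) \<and> 2 \<le> card X"
  unfolding blocks_def by blast

lemma blocks_subset_Pow_B: "blocks \<subseteq> Pow B"
  using mem_blocks_iff by blast

end

locale base_point = assembly_design +
  fixes z :: 'a and i0 :: nat
  assumes z_M: "z \<in> M" and gdist_x_z: "gdist V E x z = 2"
    and i0: "i0 < m" and M_eq: "M = insert z (row z i0)"
begin

definition C :: "'a set" where
  "C = N x \<inter> N z"

lemma z: "z \<in> V"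
  using z_M M_subset_V by blast

lemma x_ne_z: "x \<noteq> z"
  using gdist_x_z by auto

lemma not_E_x_z: "\<not> E x z"
  using gdist_x_z gdist_eq_1_iff[OF x z] by simp

lemma x_not_N_z: "x \<notin> N z"
  using not_E_x_z E_sym by (auto simp: mem_N_iff)

lemma z_not_N_x: "z \<notin> N x"
  using not_E_x_z by (simp add: mem_N_iff)

lemma C_subset_N_z: "C \<subseteq> N z"
  unfolding C_def by blast

lemma finite_C: "finite C"
  using finite_subset[OF C_subset_N_z finite_N] .

lemma card_C: "card C = (b + 1) * (\<alpha> + 1)"
  using card_Gam_pred_inter_N[OF x z gdist_x_z] D_gt_2 c2_eq Gam_1_eq_N[OF x] unfolding C_def by simp

lemma C_gdist_1: "w \<in> C \<Longrightarrow> gdist V E x w = 1"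
  unfolding C_def using gdist_eq_1_iff[OF x] by (auto simp: mem_N_iff)

lemma C_not_row_i0: "w \<in> C \<Longrightarrow> fst (cell z w) \<noteq> i0"
  using C_gdist_1 gdist_M_ge_2 M_eq C_subset_N_z unfolding row_def by fastforce

lemma card_C_col:
  assumes w: "w \<in> C"
  shows "card {w' \<in> C. snd (cell z w') = snd (cell z w)} = \<alpha> + 1"
proof -
  define L where "L = insert z (col z (snd (cell z w)))"
  have wN: "w \<in> N z" using w C_subset_N_z by blast
  have L: "L \<in> lines" unfolding L_def using insert_col_mem_lines[OF z] cell_bound[OF z wN] by blast
  have "{w' \<in> C. snd (cell z w') = snd (cell z w)} = N x \<inter> L"
    using z_not_N_x unfolding L_def C_def col_def by blast
  also have "card (N x \<inter> L) = \<alpha> + 1"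
  proof (rule card_N_inter_line[OF x L])
    show "x \<notin> L" using x_not_N_z x_ne_z unfolding L_def col_def by auto
    show "w \<in> L" using wN unfolding L_def col_def by blast
    show "E x w" using w unfolding C_def by (simp add: mem_N_iff)
  qed
  finally show ?thesis .
qed

lemma cell_inj_on_C:
  assumes w: "w \<in> C" and w': "w' \<in> C" and same: "cell z w = cell z w'"
  shows "w = w'"
proof (rule ccontr)
  assume "w \<noteq> w'"
  have wN: "w \<in> N z" "w' \<in> N z" using w w' C_subset_N_z by blast+
  have wV: "w \<in> V" using wN N_subset_V by blast
  have twins: "cell w z = cell w w'" by (rule cell_twins[OF z wN \<open>w \<noteq> w'\<close> same])
  have xzN: "x \<in> N w" "z \<in> N w" "w' \<in> N w"
    using x z w wN \<open>w \<noteq> w'\<close> E_iff_cell[OF z wN] same unfolding C_def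
    by (auto simp: mem_N_iff E_commute[of w])
  have "x \<noteq> w'" using w' not_mem_N_self unfolding C_def by blast
  then have "E x w' \<longleftrightarrow> E x z"
    using E_iff_same_cell[OF wV xzN(3) xzN(2) xzN(1) twins[symmetric]] x_ne_z by blast
  then show False using w' not_E_x_z unfolding C_def by (simp add: mem_N_iff)
qed

lemma card_C_row:
  assumes w: "w \<in> C"
  shows "card {w' \<in> C. fst (cell z w') = fst (cell z w)} = \<alpha> + 1"
proof -
  define Cc where "Cc = {w' \<in> C. snd (cell z w') = snd (cell z w)}"
  define Cr where "Cr = {w' \<in> C. fst (cell z w') = fst (cell z w)}"
  have wN: "w \<in> N z" using w C_subset_N_z by blast
  have wV: "w \<in> V" using wN N_subset_V by blast
  have Cc_Cr: "Cc \<inter> Cr = {w}"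
    using cell_inj_on_C w unfolding Cc_def Cr_def by (auto simp: prod_eq_iff)
  have "u \<in> N w \<longleftrightarrow> u \<in> Cc \<union> Cr - {w}" if u: "u \<in> C" for u
  proof -
    have uN: "u \<in> N z" using u C_subset_N_z by blast
    then have "u \<in> N w \<longleftrightarrow> E w u" using N_subset_V by (auto simp: mem_N_iff)
    then show ?thesis using E_iff_cell[OF z wN uN] u unfolding Cc_def Cr_def by auto
  qed
  then have "N w \<inter> C = Cc \<union> Cr - {w}" unfolding Cc_def Cr_def by blast
  moreover have "N w \<inter> C = N w \<inter> N x \<inter> N z" unfolding C_def by blast
  moreover have "x \<in> N w" "z \<in> N w"
    using w wV x z unfolding C_def by (auto simp: mem_N_iff E_commute[of w])
  ultimately have "card (Cc \<union> Cr - {w}) = 2 * \<alpha>"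
    using card_common_nbrs[OF wV _ _ x_ne_z not_E_x_z] by simp
  moreover have fin: "finite (Cc \<union> Cr)" using finite_C unfolding Cc_def Cr_def by auto
  moreover have "w \<in> Cc \<union> Cr" using Cc_Cr by blast
  ultimately have "card (Cc \<union> Cr) = 2 * \<alpha> + 1" using card.remove[OF fin] by simp
  moreover have "card Cc = \<alpha> + 1" unfolding Cc_def by (rule card_C_col[OF w])
  ultimately have "card Cr + \<alpha> = 2 * \<alpha> + 1"
    using card_Un_Int[of Cc Cr] Cc_Cr fin by simp
  then show ?thesis unfolding Cr_def by simp
qed

definition C_cols :: "nat set" where
  "C_cols = (\<lambda>w. snd (cell z w)) ` C"

definition C_rows :: "nat set" where
  "C_rows = (\<lambda>w. fst (cell z w)) ` C"

lemma card_C_cols: "card C_cols = b + 1"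
proof -
  have "card C = card C_cols * (\<alpha> + 1)"
    unfolding C_cols_def by (rule card_eq_card_image_mult[OF finite_C card_C_col])
  then show ?thesis using card_C mult_right_cancel[of "\<alpha> + 1" "b + 1" "card C_cols"] by simp
qed

lemma card_C_rows: "card C_rows = b + 1"
proof -
  have "card C = card C_rows * (\<alpha> + 1)"
    unfolding C_rows_def by (rule card_eq_card_image_mult[OF finite_C card_C_row])
  then show ?thesis using card_C mult_right_cancel[of "\<alpha> + 1" "b + 1" "card C_rows"] by simp
qed

lemma C_cols_subset: "C_cols \<subseteq> {..<r}"
  unfolding C_cols_def using cell_bound[OF z] C_subset_N_z by auto

lemma C_rows_subset: "C_rows \<subseteq> {..<m}"
  unfolding C_rows_def using cell_bound[OF z] C_subset_N_z by auto

lemma i0_not_C_rows: "i0 \<notin> C_rows"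
  unfolding C_rows_def using C_not_row_i0 by auto

lemma C_eq_Gam: "C = Gam V E 1 x \<inter> N z"
  unfolding C_def using Gam_1_eq_N[OF x] by simp

definition S :: "'a set" where
  "S = Gam V E 2 x \<inter> N z"

lemma N_z_eq: "N z = C \<union> S \<union> (Gam V E 3 x \<inter> N z)"
proof -
  have "gdist V E x u \<in> {1, 2, 3}" if u: "u \<in> N z" for u
  proof -
    have uV: "u \<in> V" and zu: "E z u" using u by (auto simp: mem_N_iff)
    have "gdist V E x u \<le> 3" using gdist_le_Suc_edge[OF x z uV zu] gdist_x_z by simp
    moreover have "2 \<le> Suc (gdist V E x u)" using gdist_le_Suc_edge[OF x uV z E_sym[OF zu]] gdist_x_z by simp
    ultimately show ?thesis by auto
  qed
  then show ?thesis
    using N_subset_V unfolding C_eq_Gam S_def by (auto simp: Gam_def)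
qed

lemma card_S: "card S + card C + bs 2 = m * r * \<alpha>"
proof -
  have fin: "finite C" "finite S" "finite (Gam V E 3 x \<inter> N z)"
    using finite_C finite_N unfolding S_def by auto
  have "C \<inter> S = {}" "(C \<union> S) \<inter> (Gam V E 3 x \<inter> N z) = {}"
    unfolding C_eq_Gam S_def by (auto simp: Gam_def)
  then have "card (C \<union> S \<union> (Gam V E 3 x \<inter> N z)) = card C + card S + card (Gam V E 3 x \<inter> N z)"
    using fin by (simp add: card_Un_disjoint)
  then have "card (N z) = card C + card S + card (Gam V E 3 x \<inter> N z)"
    using arg_cong[OF N_z_eq, of card] by simp
  also have "card (Gam V E 3 x \<inter> N z) = bs 2"
    using card_Gam_Suc_inter_N[OF x z gdist_x_z] D_gt_2 by simp
  finally show ?thesis using card_N[OF z] by simp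
qed

lemma nbr_of_C_in_S:
  assumes u: "u \<in> N z" "u \<notin> C" and w: "w \<in> C" "E w u"
  shows "u \<in> S"
proof -
  have uV: "u \<in> V" and wV: "w \<in> V" using u w N_subset_V unfolding C_def by auto
  have "gdist V E x u \<le> 2" using gdist_le_Suc_edge[OF x wV uV w(2)] C_gdist_1[OF w(1)] by simp
  moreover have "gdist V E x u \<noteq> 0" using gdist_eq_0_iff[OF x uV] u(1) x_not_N_z by auto
  moreover have "gdist V E x u \<noteq> 1" using gdist_eq_1_iff[OF x uV] u uV unfolding C_def by (auto simp: mem_N_iff)
  ultimately show ?thesis using u(1) uV unfolding S_def by (auto simp: mem_Gam_iff)
qed

text \<open>Both sets below lie in \<open>S\<close>, and counting with \<open>b\<^sub>2\<close> shows that they fill it.\<close>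
definition col_mates :: "'a set" where
  "col_mates = nbrs_in z ({..<m} \<times> C_cols) - C"

definition row_mates :: "'a set" where
  "row_mates = nbrs_in z (C_rows \<times> ({..<r} - C_cols))"

lemma col_mates_subset_S: "col_mates \<subseteq> S"
proof
  fix u assume u: "u \<in> col_mates"
  then have uN: "u \<in> N z" and uC: "u \<notin> C" and "snd (cell z u) \<in> C_cols"
    unfolding col_mates_def nbrs_in_def by (auto simp: mem_Times_iff)
  then obtain w where w: "w \<in> C" "snd (cell z w) = snd (cell z u)" unfolding C_cols_def by auto
  then have "E w u" using E_iff_cell[OF z _ uN] C_subset_N_z uC by auto
  then show "u \<in> S" using nbr_of_C_in_S[OF uN uC w(1)] by blast
qed

lemma row_mates_subset_S: "row_mates \<subseteq> S"
proof
  fix u assume u: "u \<in> row_mates"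
  then have uN: "u \<in> N z" and "snd (cell z u) \<notin> C_cols" and "fst (cell z u) \<in> C_rows"
    unfolding row_mates_def nbrs_in_def by (auto simp: mem_Times_iff)
  moreover from this have uC: "u \<notin> C" unfolding C_cols_def by blast
  ultimately obtain w where w: "w \<in> C" "fst (cell z w) = fst (cell z u)" unfolding C_rows_def by auto
  then have "E w u" using E_iff_cell[OF z _ uN] C_subset_N_z uC by auto
  then show "u \<in> S" using nbr_of_C_in_S[OF uN uC w(1)] by blast
qed

lemma card_col_mates: "card col_mates + card C = m * (b + 1) * \<alpha>"
proof -
  have C: "C \<subseteq> nbrs_in z ({..<m} \<times> C_cols)"
    unfolding nbrs_in_def C_cols_def using C_subset_N_z cell_bound[OF z] by (auto simp: mem_Times_iff)
  have "card (nbrs_in z ({..<m} \<times> C_cols)) = m * (b + 1) * \<alpha>"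
    using card_nbrs_in[OF z, of "{..<m} \<times> C_cols"] C_cols_subset card_C_cols
    by (auto simp: card_cartesian_product)
  then show ?thesis unfolding col_mates_def
    using card_Diff_subset[OF finite_C C] card_mono[OF finite_nbrs_in C] by simp
qed

lemma card_row_mates: "card row_mates = (b + 1) * (r - (b + 1)) * \<alpha>"
proof -
  have "card ({..<r} - C_cols) = r - (b + 1)"
    using card_Diff_subset[OF finite_subset[OF C_cols_subset] C_cols_subset] card_C_cols by simp
  moreover have "C_rows \<times> ({..<r} - C_cols) \<subseteq> {..<m} \<times> {..<r}" using C_rows_subset by auto
  ultimately show ?thesis
    unfolding row_mates_def using card_nbrs_in[OF z] card_C_rows by (simp add: card_cartesian_product)
qed

lemma S_eq: "S = col_mates \<union> row_mates"
proof -
  have "b + 1 \<le> r" using card_mono[OF _ C_cols_subset] card_C_cols by fastforce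
  then obtain t where t: "r = b + 1 + t" using le_Suc_ex by blast
  have "b + 1 \<le> m" using card_mono[OF _ C_rows_subset] card_C_rows by fastforce
  then obtain s where s: "m = b + 1 + s" using le_Suc_ex by blast
  have "card S + card C + t * (\<alpha> * s) = m * r * \<alpha>"
    using card_S b2_eq unfolding t s by (simp add: diff_mult_distrib2[symmetric])
  then have "card S = card col_mates + card row_mates"
    using card_col_mates card_row_mates unfolding t s by (simp add: algebra_simps)
  also have "\<dots> = card (col_mates \<union> row_mates)"
    unfolding col_mates_def row_mates_def nbrs_in_def
    by (intro card_Un_disjoint[symmetric]) (auto simp: finite_N mem_Times_iff)
  finally have "card (col_mates \<union> row_mates) = card S" by simp
  moreover have "col_mates \<union> row_mates \<subseteq> S" using col_mates_subset_S row_mates_subset_S by blast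
  moreover have "finite S" unfolding S_def using finite_N by simp
  ultimately show ?thesis using card_subset_eq by metis
qed

lemma B_eq: "B = insert z (nbrs_in z ({i0} \<times> C_cols))"
proof (rule Set.set_eqI)
  fix u
  have "u \<in> B \<longleftrightarrow> u = z \<or> (u \<in> row z i0 \<and> u \<in> S)"
    using z gdist_x_z M_eq unfolding B_def S_def row_def by (auto simp: mem_Gam_iff)
  also have "\<dots> \<longleftrightarrow> u = z \<or> u \<in> nbrs_in z ({i0} \<times> C_cols)"
  proof -
    have "u \<in> row z i0 \<and> u \<in> S \<longleftrightarrow> u \<in> row z i0 \<and> u \<in> col_mates"
      using S_eq col_mates_subset_S i0_not_C_rows unfolding row_mates_def row_def nbrs_in_def
      by (auto simp: mem_Times_iff)
    also have "\<dots> \<longleftrightarrow> u \<in> nbrs_in z ({i0} \<times> C_cols)"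
      using C_not_row_i0 i0 unfolding col_mates_def row_def nbrs_in_def by (auto simp: mem_Times_iff)
    finally show ?thesis by simp
  qed
  finally show "u \<in> B \<longleftrightarrow> u \<in> insert z (nbrs_in z ({i0} \<times> C_cols))" by simp
qed

lemma card_B_local: "card B = \<alpha> * (b + 1) + 1"
proof -
  have "card (nbrs_in z ({i0} \<times> C_cols)) = (b + 1) * \<alpha>"
    using card_nbrs_in[OF z, of "{i0} \<times> C_cols"] C_cols_subset i0 card_C_cols
    by (auto simp: card_cartesian_product)
  moreover have "z \<notin> nbrs_in z ({i0} \<times> C_cols)" using not_mem_N_self nbrs_in_subset_N by blast
  ultimately show ?thesis using B_eq finite_nbrs_in by simp
qed

lemma line_inter_B:
  "insert z (col z j) \<inter> B = (if j \<in> C_cols then insert z (nbrs_in z {(i0, j)}) else {z})"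
proof -
  have "insert z (col z j) \<inter> B = insert z (col z j \<inter> nbrs_in z ({i0} \<times> C_cols))"
    using B_eq by blast
  also have "col z j \<inter> nbrs_in z ({i0} \<times> C_cols) = (if j \<in> C_cols then nbrs_in z {(i0, j)} else {})"
    unfolding col_def nbrs_in_def by (auto simp: mem_Times_iff prod_eq_iff)
  finally show ?thesis by simp
qed

lemma card_insert_cell:
  assumes "j < r"
  shows "card (insert z (nbrs_in z {(i0, j)})) = \<alpha> + 1"
proof -
  have "card (nbrs_in z {(i0, j)}) = \<alpha>" using card_nbrs_in[OF z, of "{(i0, j)}"] assms i0 by simp
  moreover have "z \<notin> nbrs_in z {(i0, j)}" using not_mem_N_self nbrs_in_subset_N by blast
  ultimately show ?thesis using finite_nbrs_in by simp
qed

lemma blocks_through_z: "{X \<in> blocks. z \<in> X} = (\<lambda>j. insert z (nbrs_in z {(i0, j)})) ` C_cols"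
proof
  show "{X \<in> blocks. z \<in> X} \<subseteq> (\<lambda>j. insert z (nbrs_in z {(i0, j)})) ` C_cols"
  proof
    fix X assume X: "X \<in> {X \<in> blocks. z \<in> X}"
    then obtain l where l: "X = l \<inter> B" "l \<in> lines" "2 \<le> card (l \<inter> B)"
      using mem_blocks_iff Cs_eq_lines by auto
    have "z \<in> l" using X l(1) by blast
    then obtain j where j: "j < r" "l = insert z (col z j)"
      using line_eq_insert_col[OF l(2)] by blast
    have "j \<in> C_cols"
    proof (rule ccontr)
      assume "j \<notin> C_cols"
      then have "l \<inter> B = {z}" using line_inter_B[of j] j(2) by simp
      then show False using l(3) by simp
    qed
    then show "X \<in> (\<lambda>j. insert z (nbrs_in z {(i0, j)})) ` C_cols"
      using l(1) j(2) line_inter_B[of j] by simp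
  qed
next
  show "(\<lambda>j. insert z (nbrs_in z {(i0, j)})) ` C_cols \<subseteq> {X \<in> blocks. z \<in> X}"
  proof
    fix X assume "X \<in> (\<lambda>j. insert z (nbrs_in z {(i0, j)})) ` C_cols"
    then obtain j where j: "j \<in> C_cols" "X = insert z (nbrs_in z {(i0, j)})" by blast
    have jr: "j < r" using j(1) C_cols_subset by blast
    have "insert z (col z j) \<in> Cs" using insert_col_mem_lines[OF z jr] Cs_eq_lines by simp
    moreover have "insert z (col z j) \<inter> B = X" using line_inter_B[of j] j by simp
    moreover have "2 \<le> card X" using card_insert_cell[OF jr] j(2) alpha_pos by simp
    ultimately have "X \<in> blocks" unfolding mem_blocks_iff by blast
    then show "X \<in> {X \<in> blocks. z \<in> X}" using j(2) by blast
  qed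
qed

lemma card_blocks_through_z: "card {X \<in> blocks. z \<in> X} = b + 1"
proof -
  have "inj_on (\<lambda>j. insert z (nbrs_in z {(i0, j)})) C_cols"
  proof (rule inj_onI)
    fix j1 j2
    assume j: "j1 \<in> C_cols" "j2 \<in> C_cols"
      and eq: "insert z (nbrs_in z {(i0, j1)}) = insert z (nbrs_in z {(i0, j2)})"
    obtain u where u: "u \<in> N z" "cell z u = (i0, j1)"
      using ex_nbr_in_cell[OF z i0] j(1) C_cols_subset by blast
    then have "u \<in> insert z (nbrs_in z {(i0, j2)})" using eq unfolding nbrs_in_def by auto
    moreover have "u \<noteq> z" using u(1) not_mem_N_self by blast
    ultimately have "u \<in> nbrs_in z {(i0, j2)}" by simp
    then show "j1 = j2" using u(2) unfolding nbrs_in_def by simp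
  qed
  then show ?thesis using blocks_through_z card_C_cols by (simp add: card_image)
qed

lemma card_block_through_z:
  assumes "X \<in> blocks" "z \<in> X"
  shows "card X = \<alpha> + 1"
proof -
  obtain j where "j \<in> C_cols" "X = insert z (nbrs_in z {(i0, j)})"
    using blocks_through_z assms by blast
  then show ?thesis using card_insert_cell[of j] C_cols_subset by auto
qed

end

section \<open>The design\<close>

context assembly_design
begin

lemma ex_base_point:
  assumes "z \<in> B"
  shows "\<exists>i0. base_point V E \<alpha> m r Cs D bs cs b M x z i0"
proof -
  have zM: "z \<in> M" and "gdist V E x z = 2" using assms unfolding B_def Gam_def by auto
  moreover obtain i0 where "i0 < m" "M = insert z (row z i0)" using M_eq_insert_row[OF zM] by blast
  ultimately show ?thesis
    using assembly_design_axioms by (auto simp: base_point_def base_point_axioms_def)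
qed

lemma ex_mem_B: "\<exists>z. z \<in> B"
  using ex_M_gdist_2 M_subset_V unfolding B_def Gam_def by blast

lemma card_B: "card B = \<alpha> * (b + 1) + 1"
  using ex_mem_B ex_base_point base_point.card_B_local by metis

lemma card_blocks_through:
  "z \<in> B \<Longrightarrow> card {X \<in> blocks. z \<in> X} = b + 1"
  using ex_base_point base_point.card_blocks_through_z by metis

lemma card_block:
  assumes X: "X \<in> blocks"
  shows "card X = \<alpha> + 1"
proof -
  have "X \<noteq> {}" using X mem_blocks_iff by fastforce
  then obtain z where z: "z \<in> X" by blast
  then have "z \<in> B" using X blocks_subset_Pow_B by blast
  then show ?thesis using ex_base_point base_point.card_block_through_z X z by metis
qed

lemma card_blocks_containing_pair:
  assumes T: "T \<subseteq> B" "card T = 2"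
  shows "card {X \<in> blocks. T \<subseteq> X} = 1"
proof -
  obtain u v where uv: "T = {u, v}" "u \<noteq> v" using T(2) by (auto simp: card_2_iff)
  then have "u \<in> M" "v \<in> M" using T(1) unfolding B_def by auto
  then have uvV: "u \<in> V" "v \<in> V" and "E u v" using M_clique uv(2) unfolding is_clique_def by auto
  then obtain l0 where l0: "l0 \<in> Cs" "u \<in> l0" "v \<in> l0"
    and unique: "\<And>l. l \<in> Cs \<Longrightarrow> u \<in> l \<Longrightarrow> v \<in> l \<Longrightarrow> l = l0"
    using geometric unfolding geometric_wrt_def by metis
  have "T \<subseteq> l0 \<inter> B" using l0 uv(1) T(1) by blast
  then have "2 \<le> card (l0 \<inter> B)" using T(2) card_mono[of "l0 \<inter> B" T] finite_B by simp
  then have "l0 \<inter> B \<in> blocks" using l0(1) unfolding mem_blocks_iff by blast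
  then have "{X \<in> blocks. T \<subseteq> X} = {l0 \<inter> B}"
    using unique uv(1) \<open>T \<subseteq> l0 \<inter> B\<close> unfolding mem_blocks_iff by blast
  then show ?thesis by simp
qed

theorem t_design_B_blocks: "t_design 2 (\<alpha> * (b + 1) + 1) (\<alpha> + 1) 1 B blocks"
  unfolding t_design_def using finite_B card_B card_block blocks_subset_Pow_B card_blocks_containing_pair
  by blast

lemma card_B_mult_eq: "card B * (b + 1) = card blocks * (\<alpha> + 1)"
proof -
  have "(\<Sum>z\<in>B. card {X \<in> blocks. z \<in> X}) = (\<alpha> + 1) * card blocks"
  proof (rule sum_multicount[OF finite_B])
    show "finite blocks" using finite_subset[OF blocks_subset_Pow_B] finite_B by blast
    show "\<forall>X\<in>blocks. card {z \<in> B. z \<in> X} = \<alpha> + 1"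
    proof
      fix X assume X: "X \<in> blocks"
      then have "{z \<in> B. z \<in> X} = X" using blocks_subset_Pow_B by blast
      then show "card {z \<in> B. z \<in> X} = \<alpha> + 1" using card_block[OF X] by simp
    qed
  qed
  then show ?thesis using card_blocks_through by (simp add: mult.commute)
qed

lemma Suc_alpha_dvd_b_mult_Suc_b: "(\<alpha> + 1) dvd (b * (b + 1))"
proof -
  have "(\<alpha> + 1) dvd ((\<alpha> * (b + 1) + 1) * (b + 1))"
    using card_B_mult_eq card_B by (metis dvd_triv_right)
  moreover have "(\<alpha> * (b + 1) + 1) * (b + 1) + b * (b + 1) = (\<alpha> + 1) * ((b + 1) * (b + 1))"
    by (simp add: algebra_simps)
  ultimately show ?thesis by (metis dvd_add_right_iff dvd_triv_left)
qed

end

section \<open>Classical parameters\<close>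

lemma qint_2: "qint b 2 = 1 + b"
  unfolding qint_def by (simp add: numeral_2_eq_2)

lemma qint_ge_3:
  assumes "0 \<le> b" "3 \<le> D"
  shows "1 + b + b\<^sup>2 \<le> qint b D"
proof -
  have "qint b 3 \<le> qint b D"
    unfolding qint_def using assms by (intro sum_mono2) auto
  moreover have "qint b 3 = 1 + b + b\<^sup>2"
    unfolding qint_def by (simp add: numeral_3_eq_3 power2_eq_square)
  ultimately show ?thesis by simp
qed

lemma classical_parameters_c2_b2:
  assumes "classical_parameters V E D b \<alpha> \<beta>" and "3 \<le> D"
  obtains bs cs where "distance_regular V E D bs cs"
    and "int (cs 2) = (1 + b) * (1 + \<alpha>)"
    and "int (bs 2) = (qint b D - (1 + b)) * (\<beta> - \<alpha> * (1 + b))"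
proof -
  obtain bs cs where dr: "distance_regular V E D bs cs"
    and bs: "\<forall>i<D. int (bs i) = (qint b D - qint b i) * (\<beta> - \<alpha> * qint b i)"
    and cs: "\<forall>i. 1 \<le> i \<and> i \<le> D \<longrightarrow> int (cs i) = qint b i * (1 + \<alpha> * qint b (i - 1))"
    using assms(1) unfolding classical_parameters_def by blast
  have "int (cs 2) = qint b 2 * (1 + \<alpha> * qint b (2 - 1))" using cs assms(2) by simp
  moreover have "qint b (2 - 1) = 1" by (simp add: qint_def)
  ultimately have "int (cs 2) = (1 + b) * (1 + \<alpha>)" by (simp add: qint_2)
  moreover have "int (bs 2) = (qint b D - (1 + b)) * (\<beta> - \<alpha> * (1 + b))"
    using bs assms(2) by (simp add: qint_2)
  ultimately show thesis using that dr by blast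
qed

lemma classical_parameters_grid_counts:
  assumes cp: "classical_parameters V E D (int b) (int \<alpha>) (int \<beta>)"
    and b: "2 \<le> b" and D: "3 \<le> D" and \<alpha>\<beta>: "\<alpha> dvd \<beta>"
    and big: "int \<alpha> * qint (int b) D < int \<beta>"
  defines "m \<equiv> \<beta> div \<alpha>" and "r \<equiv> nat (qint (int b) D)"
  obtains bs cs where "distance_regular V E D bs cs"
    and "cs 2 = (b + 1) * (\<alpha> + 1)" and "bs 2 = (r - (b + 1)) * (\<alpha> * m - \<alpha> * (b + 1))"
    and "1 < r" and "r < m"
proof -
  obtain bs cs where dr: "distance_regular V E D bs cs"
    and cs2: "int (cs 2) = (1 + int b) * (1 + int \<alpha>)"
    and bs2: "int (bs 2) = (qint (int b) D - (1 + int b)) * (int \<beta> - int \<alpha> * (1 + int b))"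
    using classical_parameters_c2_b2[OF cp D] by blast
  have \<beta>: "\<beta> = \<alpha> * m" unfolding m_def using \<alpha>\<beta> by simp
  have "1 + int b + (int b)\<^sup>2 \<le> qint (int b) D" using qint_ge_3[OF _ D] by simp
  moreover have "1 \<le> (int b)\<^sup>2" using b by (simp add: one_le_power)
  ultimately have r: "int r = qint (int b) D" "b + 2 \<le> r" unfolding r_def by linarith+
  then have "r < m" using big \<beta> by (simp add: mult_less_cancel_left)
  have "\<alpha> * (b + 1) \<le> \<alpha> * m" using r(2) \<open>r < m\<close> by (intro mult_le_mono2) simp
  moreover have "b + 1 \<le> r" using r(2) by simp
  ultimately have "int (bs 2) = int ((r - (b + 1)) * (\<alpha> * m - \<alpha> * (b + 1)))"
    using bs2 r(1) \<beta> by (simp add: of_nat_diff distrib_left)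
  then have "bs 2 = (r - (b + 1)) * (\<alpha> * m - \<alpha> * (b + 1))" by (simp only: of_nat_eq_iff)
  moreover have "int (cs 2) = int ((b + 1) * (\<alpha> + 1))" using cs2 by (simp add: algebra_simps)
  then have "cs 2 = (b + 1) * (\<alpha> + 1)" by (simp only: of_nat_eq_iff)
  ultimately show thesis using that dr r(2) \<open>r < m\<close> by simp
qed

theorem theorem28:
  fixes V :: "'a set" and E :: "'a \<Rightarrow> 'a \<Rightarrow> bool" and \<C> :: "'a set set"
    and D b \<alpha> \<beta> :: nat and M :: "'a set" and x :: 'a
  assumes cp: "classical_parameters V E D (int b) (int \<alpha>) (int \<beta>)"
    and b2: "b \<ge> 2" and \<alpha>1: "1 \<le> \<alpha>" and \<alpha>b: "\<alpha> \<le> b - 1" and D3: "D \<ge> 3"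
    and geom: "geometric_wrt V E \<C>"
    and \<alpha>dvd: "\<alpha> dvd \<beta>"
    and loc: "\<forall>y\<in>V. local_is_ext_grid V E y \<alpha> (\<beta> div \<alpha>) (nat (qint (int b) D))"
    and big: "int \<beta> > int \<alpha> * qint (int b) D"
    and asm: "assembly V E \<C> M"
    and xV: "x \<in> V" and xM: "set_dist V E x M = 2"
  shows "t_design 2 (\<alpha> * (b + 1) + 1) (\<alpha> + 1) 1 (Gam V E 2 x \<inter> M)
           {l \<inter> (Gam V E 2 x \<inter> M) | l. l \<in> \<C> \<and> card (l \<inter> (Gam V E 2 x \<inter> M)) \<ge> 2}
         \<and> (\<alpha> + 1) dvd (b * (b + 1))"
proof -
  obtain bs cs where dr: "distance_regular V E D bs cs"
    and "cs 2 = (b + 1) * (\<alpha> + 1)"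
    and "bs 2 = (nat (qint (int b) D) - (b + 1)) * (\<alpha> * (\<beta> div \<alpha>) - \<alpha> * (b + 1))"
    and "1 < nat (qint (int b) D)" and "nat (qint (int b) D) < \<beta> div \<alpha>"
    using classical_parameters_grid_counts[OF cp b2 D3 \<alpha>dvd big] by blast
  then interpret assembly_design V E \<alpha> "\<beta> div \<alpha>" "nat (qint (int b) D)" \<C> D bs cs b M x
  proof unfold_locales
    show "simple_graph V E" "connected_graph V E" "distance_regular V E D bs cs"
      using dr unfolding distance_regular_def by blast+
  qed (use \<alpha>1 D3 geom loc asm xV xM in auto)
  show ?thesis using t_design_B_blocks Suc_alpha_dvd_b_mult_Suc_b unfolding B_def blocks_def by blast
qed

end
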